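(* Let $C=(c_{k,j})\in\mathbb{R}_{\max}^{p\times n}$, $\mu^+\in\mathbb{Z}_{\ge0}^p$, $\mu^-\in\mathbb{Z}_{\ge0}^n$ with $\sum_{k\in[p]}\mu^+_k=\sum_{j\in[n]}\mu^-_j$, and $f(x)=\sum_{k=1}^p\mu^+_k\max_{j\in[n]}(c_{k,j}+x_j)-\sum_{j=1}^n\mu^-_jx_j$. Then: (1) $f(\alpha\otimes x)=f(x)$ for any $x\in\mathbb{R}_{\max}^n$ and $\alpha\in\mathbb{R}$; (2) $f(x)+f(y)\ge f(x\oplus y)+f(x\oplus' y)$ for any $x,y\in\mathbb{R}_{\max}^n$.
   Context: $\mathbb{R}_{\max}=\mathbb{R}\cup\{-\infty\}$; $\alpha\otimes x$ is the vector with entries $\alpha+x_j$; $x\oplus y$ and $x\oplus' y$ are the entrywise maximum and minimum of $x$ and $y$. The identities are understood for vectors on which $f$ is well defined. *)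

theory Defs
  imports "HOL-Library.Extended_Real"
begin

text \<open>Elements of R_max = R \<union> {-\<infinity>} are modelled as extended reals different from \<infinity>.
  Vectors in R_max^n are functions nat \<Rightarrow> ereal, of which only the entries j < n matter.
  The matrix C in R_max^(p x n) is C :: nat \<Rightarrow> nat \<Rightarrow> ereal (entries k < p, j < n).\<close>

definition tmax :: "(nat \<Rightarrow> ereal) \<Rightarrow> (nat \<Rightarrow> ereal) \<Rightarrow> nat \<Rightarrow> ereal"  (infixl "\<oplus>" 65) where
  "x \<oplus> y = (\<lambda>j. max (x j) (y j))"

definition tmin :: "(nat \<Rightarrow> ereal) \<Rightarrow> (nat \<Rightarrow> ereal) \<Rightarrow> nat \<Rightarrow> ereal"  (infixl "\<oplus>''" 65) where
  "x \<oplus>' y = (\<lambda>j. min (x j) (y j))"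

definition tscale :: "real \<Rightarrow> (nat \<Rightarrow> ereal) \<Rightarrow> nat \<Rightarrow> ereal"  (infixr "\<otimes>" 70) where
  "\<alpha> \<otimes> x = (\<lambda>j. ereal \<alpha> + x j)"

definition rowmax :: "nat \<Rightarrow> (nat \<Rightarrow> nat \<Rightarrow> ereal) \<Rightarrow> nat \<Rightarrow> (nat \<Rightarrow> ereal) \<Rightarrow> ereal" where
  "rowmax n C k x = (SUP j\<in>{..<n}. C k j + x j)"

text \<open>f is well defined at x iff the expression does not contain -\<infinity> - (-\<infinity>), i.e.
  not both some term mu+_k * max_j(...) with mu+_k > 0 equals -\<infinity> and some
  term mu-_j x_j with mu-_j > 0 equals -\<infinity>.\<close>
definition f_welldef :: "nat \<Rightarrow> nat \<Rightarrow> (nat \<Rightarrow> nat \<Rightarrow> ereal) \<Rightarrow> (nat \<Rightarrow> nat) \<Rightarrow> (nat \<Rightarrow> nat)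
    \<Rightarrow> (nat \<Rightarrow> ereal) \<Rightarrow> bool" where
  "f_welldef p n C mup mum x \<longleftrightarrow>
     \<not> ((\<exists>k<p. mup k > 0 \<and> rowmax n C k x = -\<infinity>) \<and> (\<exists>j<n. mum j > 0 \<and> x j = -\<infinity>))"

definition f_val :: "nat \<Rightarrow> nat \<Rightarrow> (nat \<Rightarrow> nat \<Rightarrow> ereal) \<Rightarrow> (nat \<Rightarrow> nat) \<Rightarrow> (nat \<Rightarrow> nat)
    \<Rightarrow> (nat \<Rightarrow> ereal) \<Rightarrow> ereal" where
  "f_val p n C mup mum x =
     (\<Sum>k<p. ereal (real (mup k)) * rowmax n C k x) - (\<Sum>j<n. ereal (real (mum j)) * x j)"

end

theory Submission
  imports Defs
begin

text \<open>Shifting \<open>x\<close> by \<open>\<alpha>\<close> shifts every row maximum by \<open>\<alpha>\<close>, so the two sums in \<open>f\<close>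
  grow by \<open>\<alpha> \<Sum>\<mu>\<^sup>+\<close> and \<open>\<alpha> \<Sum>\<mu>\<^sup>-\<close>, which cancel by the balance condition.
  The linear sum is modular, since \<open>max a b + min a b = a + b\<close> entrywise, while the
  max-plus sum is submodular: the row maximum at \<open>x \<oplus> y\<close> is the maximum of those at
  \<open>x\<close> and \<open>y\<close>, and the one at \<open>x \<oplus>' y\<close> is at most their minimum.

  In \<^typ>\<open>ereal\<close>, where \<open>\<infinity> - \<infinity> = \<infinity>\<close>, both parts hold without the
  well-definedness hypotheses and without finiteness of \<open>C\<close>; these only ensure that
  \<^const>\<open>f_val\<close> is the intended value.\<close>

lemma ereal_add_diff_add_left: "(ereal a + b) - (ereal a + c) = b - (c :: ereal)"
  by (cases b; cases c) simp_all

lemma ereal_diff_add_diff: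
  fixes a b c d :: ereal
  assumes "b \<noteq> \<infinity>" "d \<noteq> \<infinity>"
  shows "(a - b) + (c - d) = (a + c) - (b + d)"
  using assms by (cases a; cases b; cases c; cases d) simp_all

definition weighted_sum :: "('a \<Rightarrow> nat) \<Rightarrow> 'a set \<Rightarrow> ('a \<Rightarrow> ereal) \<Rightarrow> ereal" where
  "weighted_sum m A z = (\<Sum>i\<in>A. ereal (real (m i)) * z i)"

lemma f_val_weighted_sum:
  "f_val p n C mup mum x
     = weighted_sum mup {..<p} (\<lambda>k. rowmax n C k x) - weighted_sum mum {..<n} x"
  by (simp add: f_val_def weighted_sum_def)

lemma weighted_sum_shift:
  "weighted_sum m A (\<lambda>i. ereal a + z i) = ereal (a * (\<Sum>i\<in>A. real (m i))) + weighted_sum m A z"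
proof -
  have "ereal (real (m i)) * (ereal a + z i) = ereal (real (m i) * a) + ereal (real (m i)) * z i" for i
    by (simp add: ereal_pos_distrib)
  then show ?thesis
    by (simp add: weighted_sum_def sum.distrib sum_distrib_left mult.commute)
qed

lemma weighted_sum_mono:
  "(\<And>i. i \<in> A \<Longrightarrow> z i \<le> w i) \<Longrightarrow> weighted_sum m A z \<le> weighted_sum m A w"
  unfolding weighted_sum_def by (intro sum_mono ereal_mult_left_mono) auto

lemma weighted_sum_max_min:
  "weighted_sum m A (\<lambda>i. max (x i) (y i)) + weighted_sum m A (\<lambda>i. min (x i) (y i))
     = weighted_sum m A x + weighted_sum m A y"
proof -
  have "ereal (real (m i)) * max (x i) (y i) + ereal (real (m i)) * min (x i) (y i)
      = ereal (real (m i)) * x i + ereal (real (m i)) * y i" for i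
    by (cases "x i \<le> y i") (simp_all add: max_def min_def add.commute)
  then show ?thesis
    by (simp add: weighted_sum_def sum.distrib[symmetric])
qed

lemma weighted_sum_neq_PInf:
  assumes "\<And>i. i \<in> A \<Longrightarrow> z i \<noteq> \<infinity>"
  shows "weighted_sum m A z \<noteq> \<infinity>"
proof -
  have "ereal (real (m i)) * z i \<noteq> \<infinity>" if "z i \<noteq> \<infinity>" for i
    using that by (cases "z i") (auto simp: zero_ereal_def)
  then show ?thesis
    using assms unfolding weighted_sum_def by (subst sum_Pinfty) blast
qed

lemma rowmax_tscale: "rowmax n C k (\<alpha> \<otimes> x) = ereal \<alpha> + rowmax n C k x"
proof (cases "n = 0")
  case True
  then show ?thesis by (simp add: rowmax_def bot_ereal_def)
next
  case False
  have "rowmax n C k (\<alpha> \<otimes> x) = (SUP j\<in>{..<n}. ereal \<alpha> + (C k j + x j))"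
    unfolding rowmax_def tscale_def by (simp add: add_ac)
  also have "\<dots> = ereal \<alpha> + rowmax n C k x"
    unfolding rowmax_def using False by (subst SUP_ereal_add_right) auto
  finally show ?thesis .
qed

lemma rowmax_tmax: "rowmax n C k (x \<oplus> y) = max (rowmax n C k x) (rowmax n C k y)"
proof -
  have "C k j + max (x j) (y j) = max (C k j + x j) (C k j + y j)" for j
    by (simp add: max_def add_left_mono order.antisym)
  then show ?thesis
    unfolding rowmax_def tmax_def by (simp only: sup_max[symmetric] Complete_Lattices.SUP_sup_distrib)
qed

lemma rowmax_mono: "(\<And>j. j < n \<Longrightarrow> x j \<le> y j) \<Longrightarrow> rowmax n C k x \<le> rowmax n C k y"
  unfolding rowmax_def by (intro SUP_mono) (auto intro: add_left_mono)

lemma rowmax_tmin_le: "rowmax n C k (x \<oplus>' y) \<le> min (rowmax n C k x) (rowmax n C k y)"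
  by (simp add: rowmax_mono tmin_def)

lemma f_val_tscale:
  assumes balance: "(\<Sum>k<p. mup k) = (\<Sum>j<n. mum j)"
  shows "f_val p n C mup mum (\<alpha> \<otimes> x) = f_val p n C mup mum x"
proof -
  have "(\<Sum>k<p. real (mup k)) = (\<Sum>j<n. real (mum j))"
    using balance by (metis of_nat_sum)
  then show ?thesis
    unfolding f_val_weighted_sum rowmax_tscale
    unfolding tscale_def weighted_sum_shift by (simp add: ereal_add_diff_add_left)
qed

lemma f_val_submodular:
  assumes "\<And>j. j < n \<Longrightarrow> x j \<noteq> \<infinity>" "\<And>j. j < n \<Longrightarrow> y j \<noteq> \<infinity>"
  shows "f_val p n C mup mum (x \<oplus> y) + f_val p n C mup mum (x \<oplus>' y)
      \<le> f_val p n C mup mum x + f_val p n C mup mum y"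
proof -
  let ?R = "\<lambda>z. weighted_sum mup {..<p} (\<lambda>k. rowmax n C k z)"
  let ?L = "\<lambda>z. weighted_sum mum {..<n} z"
  have L_neq_PInf: "?L z \<noteq> \<infinity>" if "\<And>j. j < n \<Longrightarrow> z j \<noteq> \<infinity>" for z
    using that by (intro weighted_sum_neq_PInf) auto
  have L_modular: "?L (x \<oplus> y) + ?L (x \<oplus>' y) = ?L x + ?L y"
    unfolding tmax_def tmin_def by (rule weighted_sum_max_min)
  have "?R (x \<oplus> y) + ?R (x \<oplus>' y)
      \<le> ?R (x \<oplus> y) + weighted_sum mup {..<p} (\<lambda>k. min (rowmax n C k x) (rowmax n C k y))"
    by (intro add_left_mono weighted_sum_mono rowmax_tmin_le)
  also have "\<dots> = ?R x + ?R y"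
    unfolding rowmax_tmax by (rule weighted_sum_max_min)
  finally have R_submodular: "?R (x \<oplus> y) + ?R (x \<oplus>' y) \<le> ?R x + ?R y" .
  have "(x \<oplus> y) j \<noteq> \<infinity>" "(x \<oplus>' y) j \<noteq> \<infinity>" if "j < n" for j
    using assms that by (auto simp: tmax_def tmin_def max_def min_def)
  then have "f_val p n C mup mum (x \<oplus> y) + f_val p n C mup mum (x \<oplus>' y)
      = (?R (x \<oplus> y) + ?R (x \<oplus>' y)) - (?L x + ?L y)"
    by (simp add: f_val_weighted_sum ereal_diff_add_diff L_neq_PInf flip: L_modular)
  also have "\<dots> \<le> (?R x + ?R y) - (?L x + ?L y)"
    using R_submodular by (intro ereal_minus_mono) auto
  also have "\<dots> = f_val p n C mup mum x + f_val p n C mup mum y"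
    using assms by (simp add: f_val_weighted_sum ereal_diff_add_diff L_neq_PInf)
  finally show ?thesis .
qed

theorem corollary3p2:
  fixes p n :: nat and C :: "nat \<Rightarrow> nat \<Rightarrow> ereal" and mup mum :: "nat \<Rightarrow> nat"
  assumes C_Rmax: "\<forall>k<p. \<forall>j<n. C k j \<noteq> \<infinity>"
    and balance: "(\<Sum>k<p. mup k) = (\<Sum>j<n. mum j)"
  shows "(\<forall>x (\<alpha>::real). (\<forall>j<n. x j \<noteq> \<infinity>) \<longrightarrow> f_welldef p n C mup mum x
            \<longrightarrow> f_val p n C mup mum (\<alpha> \<otimes> x) = f_val p n C mup mum x)
       \<and> (\<forall>x y. (\<forall>j<n. x j \<noteq> \<infinity>) \<longrightarrow> (\<forall>j<n. y j \<noteq> \<infinity>)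
            \<longrightarrow> f_welldef p n C mup mum x \<longrightarrow> f_welldef p n C mup mum y
            \<longrightarrow> f_welldef p n C mup mum (x \<oplus> y) \<longrightarrow> f_welldef p n C mup mum (x \<oplus>' y)
            \<longrightarrow> f_val p n C mup mum x + f_val p n C mup mum y
                \<ge> f_val p n C mup mum (x \<oplus> y) + f_val p n C mup mum (x \<oplus>' y))"
  using f_val_tscale[OF balance] f_val_submodular by blast

end
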